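(* Let $a_1,a_2,b,c$ be positive integers with $a_1<a_2<b<c\leq 0.25\,a_1^2b^3$ such that $\{a_1,b,c\}$ and $\{a_2,b,c\}$ are $D(4)$-triples. Then $\{a_1,a_2,b,c\}$ is a $D(4)$-quadruple.
   Context: A $D(4)$-$m$-tuple is a set of $m$ distinct positive integers such that the product of any two distinct elements increased by $4$ is a perfect square ($m=3$: triple, $m=4$: quadruple). *)

theory Defs
  imports Complex_Main
begin

definition is_square :: "nat \<Rightarrow> bool" where
  "is_square n \<longleftrightarrow> (\<exists>k. n = k ^ 2)"

definition D4_tuple :: "nat \<Rightarrow> nat set \<Rightarrow> bool" where
  "D4_tuple m S \<longleftrightarrow> finite S \<and> card S = m \<and> (\<forall>x\<in>S. 0 < x) \<and>
     (\<forall>x\<in>S. \<forall>y\<in>S. x \<noteq> y \<longrightarrow> is_square (x * y + 4))"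

abbreviation D4_triple :: "nat set \<Rightarrow> bool" where
  "D4_triple S \<equiv> D4_tuple 3 S"

abbreviation D4_quadruple :: "nat set \<Rightarrow> bool" where
  "D4_quadruple S \<equiv> D4_tuple 4 S"

end

theory Submission
  imports Defs
begin

text \<open>
Fix the pair \<open>b < c\<close> with \<open>bc + 4 = s\<^sup>2\<close>. If \<open>{x, b, c}\<close> is a D(4)-triple with
\<open>xb + 4 = r\<^sup>2\<close>, \<open>xc + 4 = t\<^sup>2\<close>, then \<open>q = (rt - xs)/2\<close> is a positive integer and
\<open>d = b + c - x - sq\<close> (the smaller regular extension \<open>d\<^sub>-\<close> of the triple) satisfies
\<open>xd + 4 = q\<^sup>2\<close>; equivalently \<open>q\<^sup>2 + xsq = x(b + c - x) + 4\<close>. For \<open>a\<^sub>1 < a\<^sub>2 < b\<close> the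
corresponding roots satisfy \<open>q\<^sub>1 \<le> q\<^sub>2\<close>, and the bound \<open>4c \<le> a\<^sub>1\<^sup>2b\<^sup>3\<close> rules out
\<open>q\<^sub>1 < q\<^sub>2\<close>. With \<open>q\<^sub>1 = q\<^sub>2\<close> the two equations \<open>a\<^sub>i(b + c - sq - a\<^sub>i) = q\<^sup>2 - 4\<close>
force \<open>b + c - sq = a\<^sub>1 + a\<^sub>2\<close>, hence \<open>a\<^sub>1a\<^sub>2 + 4 = q\<^sup>2\<close>.
\<close>

lemma square_sum_lt:
  fixes b c s x :: int
  assumes "0 < b" "6 * b < c" "b * c < s^2" "0 \<le> s" "0 \<le> x" "4 * c \<le> x^2 * b^3"
  shows "(b + c)^2 < x * s^3"
proof -
  have "36 * (b + c)^2 < 72 * c^2"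
  proof -
    have "6 * (b + c) < 7 * c" using assms by simp
    hence "(6 * (b + c))^2 < (7 * c)^2" using assms by (intro power_strict_mono) auto
    moreover have "(6 * (b + c))^2 = 36 * (b + c)^2" "(7 * c)^2 = 49 * c^2"
      by (simp_all add: power2_eq_square algebra_simps)
    ultimately show ?thesis using zero_le_power2[of c] by linarith
  qed
  hence "((b + c)^2)^2 < (2 * c^2)^2" by (intro power_strict_mono) auto
  hence sum4: "(b + c)^4 < 4 * c^4" by (simp add: power_mult_distrib flip: power_mult)
  have "(b * c)^3 < (s^2)^3" using assms by (intro power_strict_mono) auto
  hence bc3: "(b * c)^3 < (s^3)^2" by (simp flip: power_mult add: mult.commute)
  have "b^3 * (b + c)^4 < b^3 * (4 * c^4)" using sum4 assms by simp
  also have "\<dots> = 4 * c * (b * c)^3" by (simp add: power_mult_distrib eval_nat_numeral)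
  also have "\<dots> \<le> x^2 * b^3 * (b * c)^3" using assms by (intro mult_right_mono) auto
  also have "\<dots> \<le> x^2 * b^3 * (s^3)^2" using bc3 assms by (intro mult_left_mono) auto
  finally have "(b + c)^4 < (x * s^3)^2" using assms by (simp add: power_mult_distrib)
  hence "((b + c)^2)^2 < (x * s^3)^2" by (simp flip: power_mult)
  thus ?thesis using power_less_imp_less_base[of _ 2 "x * s^3"] assms by simp
qed

locale D4_pair =
  fixes b c s :: int
  assumes b_pos: "0 < b" and b_less_c: "b < c" and s_nonneg: "0 \<le> s"
    and s_square: "s^2 = b * c + 4"
begin

definition dminus :: "int \<Rightarrow> int \<Rightarrow> int" where
  "dminus x q = b + c - x - s * q"

definition companion :: "int \<Rightarrow> int \<Rightarrow> bool" where
  "companion x q \<longleftrightarrow> 0 < q \<and> x * dminus x q + 4 = q^2"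

lemma companion_eq:
  "companion x q \<Longrightarrow> q^2 + x * s * q = x * (b + c - x) + 4"
  unfolding companion_def dminus_def by (simp add: algebra_simps)

lemma b_less_s: "b < s"
proof -
  have "b * b < b * c" using b_pos b_less_c by simp
  hence "b^2 < s^2" using s_square by (simp add: power2_eq_square)
  thus ?thesis using s_nonneg power_less_imp_less_base by blast
qed

lemma s_le_c: "s \<le> c"
proof -
  have "b * c \<le> (c - 1) * c" using b_less_c b_pos by (intro mult_right_mono) auto
  hence "s^2 < (c + 1)^2"
    using b_pos b_less_c s_square by (simp add: power2_eq_square algebra_simps)
  thus ?thesis using b_pos b_less_c power_less_imp_less_base by fastforce
qed

lemma companion_exists:
  assumes "0 < x" "x < b" "0 \<le> r" "0 \<le> t" "r^2 = x * b + 4" "t^2 = x * c + 4"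
  shows "companion x ((r * t - x * s) div 2)"
proof -
  define Q where "Q = r * t - x * s"
  have "Q * (Q + 2 * x * s) = (Q + x * s)^2 - x^2 * s^2"
    by (simp add: power2_eq_square algebra_simps)
  also have "\<dots> = (x * b + 4) * (x * c + 4) - x^2 * (b * c + 4)"
    using assms s_square by (simp add: Q_def power_mult_distrib)
  also have "\<dots> = 4 * (x * (b + c - x) + 4)"
    by (simp add: power2_eq_square algebra_simps)
  finally have QQ: "Q * (Q + 2 * x * s) = 4 * (x * (b + c - x) + 4)" .
  have "0 < x * (b + c - x)" using assms b_less_c by simp
  hence rhs_pos: "0 < Q * (Q + 2 * x * s)" unfolding QQ by simp
  have "even Q"
    using QQ by (metis even_add even_mult_iff even_numeral)
  then obtain q where Qq: "Q = 2 * q" by blast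
  have "0 \<le> Q + 2 * x * s" using assms s_nonneg by (simp add: Q_def)
  hence "0 < Q" using rhs_pos by (smt (verit) mult_nonpos_nonneg)
  moreover have "q^2 + x * s * q = x * (b + c - x) + 4"
    using QQ Qq by (simp add: power2_eq_square algebra_simps)
  moreover have "(r * t - x * s) div 2 = q" using Qq by (simp add: Q_def)
  ultimately show ?thesis using Qq by (simp add: companion_def dminus_def algebra_simps)
qed

lemma companion_ge_2:
  assumes "0 < x" "x < b" "companion x q"
  shows "2 \<le> q"
proof (rule ccontr)
  assume "\<not> 2 \<le> q"
  hence "q = 1" using assms(3) by (simp add: companion_def)
  hence "x * dminus x 1 = -3" using assms(3) by (simp add: companion_def)
  moreover have "0 < dminus x 1" using s_le_c assms by (simp add: dminus_def)
  ultimately show False using assms(1) by (smt (verit) mult_pos_pos)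
qed

lemma dminus_nonneg:
  assumes "0 < x" "x < b" "companion x q"
  shows "0 \<le> dminus x q"
proof -
  have "2^2 \<le> q^2" using companion_ge_2[OF assms] by (intro power_mono) auto
  hence "0 \<le> x * dminus x q" using assms(3) by (simp add: companion_def)
  thus ?thesis using assms(1) by (simp add: zero_le_mult_iff)
qed

lemma companion_gap:
  assumes "companion x q" "companion y q'" "q < q'" "0 \<le> y"
  shows "y * s + 2 * q + 1 \<le> (y - x) * (dminus x q - y)"
proof -
  have "(q + 1)^2 \<le> q'^2" using assms(1-3) by (intro power_mono) (auto simp: companion_def)
  moreover have "y * s * (q + 1) \<le> y * s * q'"
    using assms s_nonneg by (intro mult_left_mono) auto
  ultimately have "(q + 1)^2 + y * s * (q + 1) \<le> y * (b + c - y) + 4"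
    using companion_eq[OF assms(2)] by linarith
  thus ?thesis
    using assms(1) by (simp add: companion_def dminus_def power2_eq_square algebra_simps)
qed

lemma companion_mono:
  assumes "0 < x1" "x1 < x2" "x2 < b" "companion x1 q1" "companion x2 q2"
  shows "q1 \<le> q2"
proof (rule ccontr)
  assume "\<not> q1 \<le> q2"
  hence "x1 * s + 2 * q2 + 1 \<le> (x2 - x1) * (x1 - dminus x2 q2)"
    using companion_gap[OF assms(5,4)] assms(1) by (simp add: algebra_simps)
  also have "\<dots> \<le> (x2 - x1) * x1"
    using dminus_nonneg[of x2 q2] assms by (intro mult_left_mono) auto
  also have "\<dots> < s * x1" using b_less_s assms by (intro mult_strict_right_mono) auto
  finally show False using assms(5) by (simp add: companion_def algebra_simps)
qed

lemma large_c_of_companion_ge_3: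
  assumes "0 < x" "companion x q" "3 \<le> q"
  shows "6 * b < c"
proof -
  have "3^2 + x * s * 3 \<le> q^2 + x * s * q"
    using assms s_nonneg by (intro add_mono power_mono mult_left_mono) auto
  hence "x * (3 * s) + 5 + x * x \<le> x * (b + c)"
    using companion_eq[OF assms(2)] by (simp add: algebra_simps)
  hence "x * (3 * s) < x * (b + c)"
    using mult_pos_pos[OF assms(1) assms(1)] by linarith
  hence "3 * s < b + c" using assms(1) by simp
  hence "(3 * s)^2 < (b + c)^2" using s_nonneg by (intro power_strict_mono) auto
  hence "9 * b * c < b^2 + 2 * b * c + c^2"
    using s_square by (simp add: power2_eq_square algebra_simps)
  moreover have "b * b < b * c" using b_pos b_less_c by simp
  ultimately have "6 * b * c < c * c" by (simp add: power2_eq_square)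
  thus ?thesis using b_pos b_less_c by (simp add: mult.commute)
qed

lemma dminus_bound:
  assumes "0 < x" "x < b" "companion x q"
  shows "x * s^2 * dminus x q < (b + c)^2"
proof -
  have sq: "0 \<le> s * q" "s * q < b + c"
    using dminus_nonneg[OF assms] assms s_nonneg by (auto simp: dminus_def companion_def)
  have "x * s^2 * dminus x q = s^2 * (x * dminus x q)" by (simp add: ac_simps)
  also have "\<dots> = s^2 * (q^2 - 4)" using assms(3) by (simp add: companion_def)
  also have "\<dots> \<le> (s * q)^2" by (simp add: power_mult_distrib algebra_simps)
  also have "\<dots> < (b + c)^2" using sq by (intro power_strict_mono) auto
  finally show ?thesis .
qed

lemma companion_antimono:
  assumes "0 < x1" "x1 < x2" "x2 < b" "companion x1 q1" "companion x2 q2"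
    and "4 * c \<le> x1^2 * b^3"
  shows "q2 \<le> q1"
proof (rule ccontr)
  assume "\<not> q2 \<le> q1"
  hence "3 \<le> q2" using companion_ge_2[of x1 q1] assms by simp
  hence "6 * b < c" using large_c_of_companion_ge_3[OF _ assms(5)] assms by simp
  hence sum_lt: "(b + c)^2 < x1 * s^3"
    using square_sum_lt b_pos s_nonneg s_square assms by simp
  have "x2 * s + 2 * q1 + 1 \<le> (x2 - x1) * (dminus x1 q1 - x2)"
    using companion_gap[OF assms(4,5)] \<open>\<not> q2 \<le> q1\<close> assms by simp
  also have "\<dots> \<le> (x2 - x1) * dminus x1 q1" using assms by (intro mult_left_mono) auto
  finally have "x2 * s < (x2 - x1) * dminus x1 q1"
    using assms(4) by (simp add: companion_def)
  hence "x1 * s^2 * (x2 * s) < x1 * s^2 * ((x2 - x1) * dminus x1 q1)"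
    using assms b_less_s b_pos by (intro mult_strict_left_mono) auto
  also have "\<dots> = (x2 - x1) * (x1 * s^2 * dminus x1 q1)" by simp
  also have "\<dots> \<le> (x2 - x1) * (b + c)^2"
    using dminus_bound[of x1 q1] assms by (intro mult_left_mono) auto
  also have "\<dots> \<le> x2 * (b + c)^2" using assms by (intro mult_right_mono) auto
  also have "\<dots> \<le> x2 * (x1 * s^3)" using sum_lt assms by (intro mult_left_mono) auto
  also have "\<dots> = x1 * s^2 * (x2 * s)" by (simp add: power2_eq_square power3_eq_cube ac_simps)
  finally show False by simp
qed

lemma companion_common_root:
  assumes "companion x q" "companion y q" "x \<noteq> y"
  shows "x * y + 4 = q^2"
proof -
  define M where "M = b + c - s * q"
  have "x * (M - x) = y * (M - y)"
    using assms by (simp add: companion_def dminus_def M_def algebra_simps)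
  hence "(x - y) * (M - x - y) = 0" by (simp add: algebra_simps)
  hence "M = x + y" using assms(3) by simp
  thus ?thesis using assms(1) by (simp add: companion_def dminus_def M_def algebra_simps)
qed

end

lemma D4_tuple_square_int:
  assumes "D4_tuple m S" "x \<in> S" "y \<in> S" "x \<noteq> y"
  obtains k :: int where "0 \<le> k" "k^2 = int x * int y + 4"
proof -
  obtain k :: nat where "x * y + 4 = k^2"
    using assms unfolding D4_tuple_def is_square_def by blast
  hence "(int k)^2 = int x * int y + 4"
    by (metis of_nat_add of_nat_mult of_nat_numeral of_nat_power)
  thus thesis by (intro that[of "int k"]) auto
qed

lemma is_square_of_int:
  assumes "0 \<le> k" "k^2 = int n"
  shows "is_square n"
proof -
  have "int n = int (nat k ^ 2)" using assms by simp
  thus ?thesis unfolding is_square_def by (simp only: of_nat_eq_iff) blast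
qed

theorem mainTheorem12:
  fixes a1 a2 b c :: nat
  assumes "0 < a1" and "a1 < a2" and "a2 < b" and "b < c"
    and "real c \<le> 0.25 * real a1 ^ 2 * real b ^ 3"
    and "D4_triple {a1, b, c}" and "D4_triple {a2, b, c}"
  shows "D4_quadruple {a1, a2, b, c}"
proof -
  obtain s where s: "0 \<le> s" "s^2 = int b * int c + 4"
    using D4_tuple_square_int[OF assms(6), of b c] assms by auto
  interpret D4_pair "int b" "int c" s
    using s assms by unfold_locales auto
  have root: "\<exists>q. companion (int x) q"
    if triple: "D4_triple {x, b, c}" and x: "0 < x" "x < b" for x
  proof -
    obtain r where "0 \<le> r" "r^2 = int x * int b + 4"
      using D4_tuple_square_int[OF triple, of x b] x by auto
    moreover obtain t where "0 \<le> t" "t^2 = int x * int c + 4"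
      using D4_tuple_square_int[OF triple, of x c] x assms(4) by auto
    ultimately have "companion (int x) ((r * t - int x * s) div 2)"
      using x by (intro companion_exists) auto
    thus ?thesis ..
  qed
  obtain q1 q2 where q1: "companion (int a1) q1" and q2: "companion (int a2) q2"
    using root[OF assms(6)] root[OF assms(7)] assms by auto
  have "real (4 * c) \<le> real (a1^2 * b^3)" using assms(5) by simp
  hence "int (4 * c) \<le> int (a1^2 * b^3)" by (simp only: of_nat_le_iff)
  hence c_bound: "4 * int c \<le> int a1^2 * int b^3" by simp
  have "q1 \<le> q2" using companion_mono[OF _ _ _ q1 q2] assms by simp
  moreover have "q2 \<le> q1" using companion_antimono[OF _ _ _ q1 q2 c_bound] assms by simp
  ultimately have "q1 = q2" by simp
  hence "q1^2 = int (a1 * a2 + 4)"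
    using companion_common_root[OF q1, of "int a2"] q2 assms(2) by simp
  hence "is_square (a1 * a2 + 4)"
    using is_square_of_int[of q1] q1 by (simp add: companion_def)
  with assms show ?thesis
    unfolding D4_tuple_def by (auto simp: mult.commute)
qed

end
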